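(* Let $A$ be a real $m\times n$ matrix, $\mathbf b\in\mathbb R^m$, $\mathbf c\in\mathbb R^n$ (row vector), such that the linear program $\max\mathbf c\mathbf x$ s.t. $A\mathbf x\le\mathbf b$, $\mathbf x\ge0$ has unique optimal primal and dual solutions $\mathbf x^*$ and $\mathbf y^*$. Let $\lambda=\min(\alpha_P,\alpha_D,\beta_P,\beta_D)$. Then \[ \delta(A,\mathbf b,\mathbf c)\ \ge\ \frac{\lambda^2\,\gamma}{2\max(1,\sqrt n\|A\|)\,(1+\|A\|)}. \]
   Context: The dual is $\min\mathbf y\mathbf b$ s.t. $\mathbf yA\ge\mathbf c$, $\mathbf y\ge0$. $U=\{i:x^*_i>0\}$, $V=\{j:y^*_j>0\}$, $\bar U,\bar V$ their complements. Define $\alpha_P=\min_{i\in U}x^*_i$, $\alpha_D=\min_{j\in V}y^*_j$, $\beta_P=\min_{j\in\bar V}(b_j-A_{j,:}\mathbf x^* )$, $\beta_D=\min_{i\in\bar U}(\mathbf y^*A_{:,i}-c_i)$, and $\gamma=\min_{k\in U}\mathrm{dist}(A_{V,k},\mathrm{span}(A_{V,U\setminus\{k\}}))$, where $A_{V,k}$ is column $k$ restricted to rows in $V$ and $\mathrm{span}(A_{V,U\setminus\{k\}})$ is the span of the columns indexed by $U\setminus\{k\}$ restricted to rows $V$. $\|A\|$ is the spectral norm. For a primal feasible $\mathbf x$, $U(\mathbf x)$ and $V(\mathbf x)$ are the index sets such that $\{x_i:i\notin U(\mathbf x)\}\cup\{b_j-A_{j,:}\mathbf x:j\in V(\mathbf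 x)\}$ are the $n$ smallest values among $\{x_i\}\cup\{b_j-A_{j,:}\mathbf x\}$. $\delta(A,\mathbf b,\mathbf c)$ is the supremum of those $\delta$ such that for every primal feasible $\mathbf x$, $\mathbf c\mathbf x^*-\mathbf c\mathbf x<\delta$ implies $U(\mathbf x)=U$ and $V(\mathbf x)=V$. *)

theory Defs
  imports "HOL-Analysis.Analysis"
begin

text \<open>LP: max c.x s.t. A x <= b, x >= 0; dual: min y.b s.t. y A >= c, y >= 0.
  A is an m x n real matrix, represented as real^'n^'m (rows indexed by 'm).\<close>

definition primal_feasible :: "real^'n^'m \<Rightarrow> real^'m \<Rightarrow> real^'n \<Rightarrow> bool" where
  "primal_feasible A b x \<longleftrightarrow> (\<forall>i. 0 \<le> x $ i) \<and> (\<forall>j. (A *v x) $ j \<le> b $ j)"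

definition dual_feasible :: "real^'n^'m \<Rightarrow> real^'n \<Rightarrow> real^'m \<Rightarrow> bool" where
  "dual_feasible A c y \<longleftrightarrow> (\<forall>j. 0 \<le> y $ j) \<and> (\<forall>i. c $ i \<le> (y v* A) $ i)"

definition primal_optimal :: "real^'n^'m \<Rightarrow> real^'m \<Rightarrow> real^'n \<Rightarrow> real^'n \<Rightarrow> bool" where
  "primal_optimal A b c x \<longleftrightarrow> primal_feasible A b x \<and>
     (\<forall>x'. primal_feasible A b x' \<longrightarrow> c \<bullet> x' \<le> c \<bullet> x)"

definition dual_optimal :: "real^'n^'m \<Rightarrow> real^'m \<Rightarrow> real^'n \<Rightarrow> real^'m \<Rightarrow> bool" where
  "dual_optimal A b c y \<longleftrightarrow> dual_feasible A c y \<and>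
     (\<forall>y'. dual_feasible A c y' \<longrightarrow> y \<bullet> b \<le> y' \<bullet> b)"

definition slack :: "real^'n^'m \<Rightarrow> real^'m \<Rightarrow> real^'n \<Rightarrow> 'm \<Rightarrow> real" where
  "slack A b x j = b $ j - (A *v x) $ j"

definition supp_vec :: "real^'k \<Rightarrow> 'k set" where
  "supp_vec v = {i. 0 < v $ i}"

text \<open>Minima over possibly empty sets, as extended reals (min of the empty set is +infinity).\<close>
definition alpha_P :: "real^'n \<Rightarrow> ereal" where
  "alpha_P xs = (INF i\<in>supp_vec xs. ereal (xs $ i))"

definition alpha_D :: "real^'m \<Rightarrow> ereal" where
  "alpha_D ys = (INF j\<in>supp_vec ys. ereal (ys $ j))"

definition beta_P :: "real^'n^'m \<Rightarrow> real^'m \<Rightarrow> real^'n \<Rightarrow> real^'m \<Rightarrow> ereal" where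
  "beta_P A b xs ys = (INF j\<in>- supp_vec ys. ereal (slack A b xs j))"

definition beta_D :: "real^'n^'m \<Rightarrow> real^'n \<Rightarrow> real^'n \<Rightarrow> real^'m \<Rightarrow> ereal" where
  "beta_D A c xs ys = (INF i\<in>- supp_vec xs. ereal ((ys v* A) $ i - c $ i))"

text \<open>Column k of A restricted to the rows in V, embedded in R^m by zero-padding the
  rows outside V (this does not change distances to spans of such vectors).\<close>
definition col_restr :: "real^'n^'m \<Rightarrow> 'm set \<Rightarrow> 'n \<Rightarrow> real^'m" where
  "col_restr A V k = (\<chi> j. if j \<in> V then A $ j $ k else 0)"

definition gamma :: "real^'n^'m \<Rightarrow> 'n set \<Rightarrow> 'm set \<Rightarrow> ereal" where
  "gamma A U V = (if U = {} then 0 else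
     (INF k\<in>U. ereal (infdist (col_restr A V k) (span (col_restr A V ` (U - {k}))))))"

text \<open>"U(x) = U and V(x) = V": the values x_i (i not in U) and slacks (j in V) are
  exactly the n smallest among all x_i and all slacks, i.e. there are n of them and each is
  strictly smaller than every value not selected (so the selection is unique).\<close>
definition selects_n_smallest ::
  "real^'n^'m \<Rightarrow> real^'m \<Rightarrow> real^'n \<Rightarrow> 'n set \<Rightarrow> 'm set \<Rightarrow> bool" where
  "selects_n_smallest A b x U V \<longleftrightarrow>
     card (- U) + card V = CARD('n) \<and>
     (\<forall>i\<in>- U. \<forall>i'\<in>U. x $ i < x $ i') \<and>
     (\<forall>i\<in>- U. \<forall>j'\<in>- V. x $ i < slack A b x j') \<and>
     (\<forall>j\<in>V. \<forall>i'\<in>U. slack A b x j < x $ i') \<and>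
     (\<forall>j\<in>V. \<forall>j'\<in>- V. slack A b x j < slack A b x j')"

definition delta :: "real^'n^'m \<Rightarrow> real^'m \<Rightarrow> real^'n \<Rightarrow> real^'n \<Rightarrow> real^'m \<Rightarrow> ereal" where
  "delta A b c xs ys = Sup (ereal ` {d. \<forall>x. primal_feasible A b x \<longrightarrow> c \<bullet> xs - c \<bullet> x < d \<longrightarrow>
       selects_n_smallest A b x (supp_vec xs) (supp_vec ys)})"

end

theory Submission
  imports Defs
begin

(* Strong duality (Farkas, via a separating hyperplane) yields complementary slackness, so for a
   feasible x the objective gap bounds lambda times the sum of the slacks s_j (j in V) and of the
   x_i (i not in U); these small quantities are therefore at most e = gap / lambda.  On the rows
   V, the displacement d = (x - xs) restricted to U satisfies A_{V,U} d = - s_V - A_{V,not U} x;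
   as every column of A_{V,U} has distance at least gamma from the span of the others, each
   coordinate of d is at most max(1, ||A||) e / gamma, and the slacks outside V move by at most
   ||A|| times the displacement.  For a small gap the large quantities thus stay above the small
   ones.  Finally |U| = |V|: gamma > 0 makes the columns of A_{V,U} independent, and uniqueness of
   the dual optimum makes u |-> (u A)_U injective on vectors supported in V. *)

lemma finite_cone_separation:
  fixes S :: "'a::euclidean_space set"
  assumes "finite S" and "p \<notin> convex_cone hull S"
  obtains a where "a \<bullet> p < 0" and "\<And>g. g \<in> S \<Longrightarrow> 0 \<le> a \<bullet> g"
proof -
  have "convex (convex_cone hull S)" and "closed (convex_cone hull S)"
    using convex_convex_cone_hull closed_convex_cone_hull[OF assms(1)] by auto
  from separating_hyperplane_closed_point[OF this assms(2)]
  obtain a \<beta> where a_p: "a \<bullet> p < \<beta>" and a_hull: "\<And>h. h \<in> convex_cone hull S \<Longrightarrow> \<beta> < a \<bullet> h"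
    by blast
  have "\<beta> < 0"
    using a_hull[OF convex_cone_hull_contains_0] by simp
  have "0 \<le> a \<bullet> g" if "g \<in> S" for g
  proof (rule ccontr)
    assume "\<not> 0 \<le> a \<bullet> g"
    then have "0 \<le> \<beta> / (a \<bullet> g)"
      using \<open>\<beta> < 0\<close> by (simp add: divide_nonpos_neg)
    then have "(\<beta> / (a \<bullet> g)) *\<^sub>R g \<in> convex_cone hull S"
      by (intro convex_cone_hull_mul hull_inc that)
    from a_hull[OF this] \<open>\<not> 0 \<le> a \<bullet> g\<close> show False
      by simp
  qed
  with that a_p \<open>\<beta> < 0\<close> show thesis
    by force
qed

lemma linear_vector_matrix_mult: "linear (\<lambda>y. y v* (A :: real^'n^'m))"
  using matrix_vector_mul_linear[of "transpose A"] by simp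

lemma vector_matrix_mult_scaleR: "(r *\<^sub>R y) v* (A :: real^'n^'m) = r *\<^sub>R (y v* A)"
  using linear_scale[OF linear_vector_matrix_mult] .

lemma duality_gap_eq:
  "y \<bullet> b - c \<bullet> x =
     (\<Sum>j\<in>UNIV. y $ j * slack A b x j) + (\<Sum>i\<in>UNIV. ((y v* A) $ i - c $ i) * x $ i)"
proof -
  have "y \<bullet> b - c \<bullet> x = y \<bullet> (b - A *v x) + (y v* A - c) \<bullet> x"
    by (simp add: inner_diff_right inner_diff_left dot_lmul_matrix)
  then show ?thesis
    by (simp add: inner_vec_def slack_def)
qed

lemma slack_nonneg: "primal_feasible A b x \<Longrightarrow> 0 \<le> slack A b x j"
  by (simp add: primal_feasible_def slack_def)

lemma weak_duality:
  assumes "primal_feasible A b x" and "dual_feasible A c y"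
  shows "c \<bullet> x \<le> y \<bullet> b"
proof -
  have "0 \<le> (\<Sum>j\<in>UNIV. y $ j * slack A b x j) + (\<Sum>i\<in>UNIV. ((y v* A) $ i - c $ i) * x $ i)"
    using assms slack_nonneg[OF assms(1)]
    by (intro add_nonneg_nonneg sum_nonneg mult_nonneg_nonneg)
       (auto simp: primal_feasible_def dual_feasible_def)
  then show ?thesis
    using duality_gap_eq[of y b c x A] by simp
qed

lemma dual_farkas_alternative:
  fixes A :: "real^'n^'m"
  assumes "\<nexists>y. dual_feasible A c y \<and> y \<bullet> b \<le> z"
  obtains w \<alpha> where "\<And>j. 0 \<le> (A *v w) $ j + \<alpha> * b $ j" and "\<And>i. w $ i \<le> 0"
    and "0 \<le> \<alpha>" and "w \<bullet> c + \<alpha> * z < 0"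
proof -
  define Orth :: "((real^'m) \<times> (real^'n) \<times> real) set"
    where "Orth = {(y, s, t). (\<forall>j. 0 \<le> y $ j) \<and> (\<forall>i. 0 \<le> s $ i) \<and> 0 \<le> t}"
  define F :: "(real^'m) \<times> (real^'n) \<times> real \<Rightarrow> (real^'n) \<times> real"
    where "F p = (fst p v* A - fst (snd p), fst p \<bullet> b + snd (snd p))" for p
  define B :: "((real^'m) \<times> (real^'n) \<times> real) set"
    where "B = range (\<lambda>j. (axis j 1, 0, 0)) \<union> range (\<lambda>i. (0, axis i 1, 0)) \<union> {(0, 0, 1)}"
  have "linear F"
    by (intro linearI) (auto simp: F_def vector_matrix_left_distrib vector_matrix_mult_scaleR algebra_simps)
  have "convex_cone Orth"
    by (auto simp: convex_cone_iff Orth_def zero_prod_def)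
  have "B \<subseteq> Orth"
    by (auto simp: B_def Orth_def axis_def)
  have "(c, z) \<notin> F ` Orth"
    using assms by (force simp: Orth_def F_def dual_feasible_def)
  moreover have "convex_cone hull (F ` B) \<subseteq> F ` Orth"
    unfolding convex_cone_hull_linear_image[OF \<open>linear F\<close>]
    using \<open>B \<subseteq> Orth\<close> \<open>convex_cone Orth\<close> by (intro image_mono hull_minimal)
  ultimately have "(c, z) \<notin> convex_cone hull (F ` B)"
    by blast
  moreover have "finite (F ` B)"
    by (simp add: B_def)
  ultimately obtain a where a_cz: "a \<bullet> (c, z) < 0" and a_FB: "\<And>g. g \<in> F ` B \<Longrightarrow> 0 \<le> a \<bullet> g"
    using finite_cone_separation by blast
  obtain w \<alpha> where a: "a = (w, \<alpha>)"
    by fastforce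
  have a_B: "0 \<le> w \<bullet> fst (F g) + \<alpha> * snd (F g)" if "g \<in> B" for g
    using a_FB[OF imageI[OF that]] by (simp add: a inner_prod_def)
  have "0 \<le> (A *v w) $ j + \<alpha> * b $ j" for j
  proof -
    have "w \<bullet> (axis j 1 v* A) = (A *v w) $ j"
      by (simp add: inner_commute[of w] dot_lmul_matrix inner_axis')
    then show ?thesis
      using a_B[of "(axis j 1, 0, 0)"] by (simp add: B_def F_def inner_axis')
  qed
  moreover have "w $ i \<le> 0" for i
    using a_B[of "(0, axis i 1, 0)"] by (simp add: B_def F_def inner_axis)
  moreover have "0 \<le> \<alpha>"
    using a_B[of "(0, 0, 1)"] by (simp add: B_def F_def)
  moreover have "w \<bullet> c + \<alpha> * z < 0"
    using a_cz by (simp add: a)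
  ultimately show thesis
    by (rule that)
qed

(* The single witness (x - w) / (1 + alpha) covers both cases alpha = 0 and alpha > 0. *)
lemma primal_improvement:
  fixes A :: "real^'n^'m"
  assumes "primal_feasible A b x"
    and rows: "\<And>j. 0 \<le> (A *v w) $ j + \<alpha> * b $ j" and signs: "\<And>i. w $ i \<le> 0"
    and "0 \<le> \<alpha>" and descent: "w \<bullet> c + \<alpha> * (c \<bullet> x) < 0"
  shows "primal_feasible A b ((1 / (1 + \<alpha>)) *\<^sub>R (x - w))"
    and "c \<bullet> x < c \<bullet> ((1 / (1 + \<alpha>)) *\<^sub>R (x - w))"
proof -
  have x_nonneg: "0 \<le> x $ i" and Ax_le: "(A *v x) $ j \<le> b $ j" for i j
    using assms(1) by (simp_all add: primal_feasible_def)
  show "primal_feasible A b ((1 / (1 + \<alpha>)) *\<^sub>R (x - w))"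
    unfolding primal_feasible_def
  proof (intro conjI allI)
    fix i
    have "0 \<le> x $ i - w $ i"
      using x_nonneg[of i] signs[of i] by simp
    then show "0 \<le> ((1 / (1 + \<alpha>)) *\<^sub>R (x - w)) $ i"
      using \<open>0 \<le> \<alpha>\<close> by simp
  next
    fix j
    have "(A *v (x - w)) $ j \<le> (1 + \<alpha>) * b $ j"
      using Ax_le[of j] rows[of j] by (simp add: matrix_vector_mult_diff_distrib algebra_simps)
    then have "(A *v (x - w)) $ j / (1 + \<alpha>) \<le> b $ j"
      using \<open>0 \<le> \<alpha>\<close> by (simp add: pos_divide_le_eq algebra_simps)
    then show "(A *v ((1 / (1 + \<alpha>)) *\<^sub>R (x - w))) $ j \<le> b $ j"
      by (simp only: matrix_vector_mult_scaleR vector_scaleR_component) simp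
  qed
  have "c \<bullet> x < (c \<bullet> x - c \<bullet> w) / (1 + \<alpha>)"
    using descent \<open>0 \<le> \<alpha>\<close> by (simp add: inner_commute pos_less_divide_eq algebra_simps)
  then show "c \<bullet> x < c \<bullet> ((1 / (1 + \<alpha>)) *\<^sub>R (x - w))"
    by (simp add: inner_diff_right)
qed

lemma dual_certificate:
  fixes A :: "real^'n^'m"
  assumes "primal_optimal A b c x"
  obtains y where "dual_feasible A c y" and "y \<bullet> b \<le> c \<bullet> x"
proof (rule ccontr)
  assume "\<not> thesis"
  with that have "\<nexists>y. dual_feasible A c y \<and> y \<bullet> b \<le> c \<bullet> x"
    by blast
  then obtain w \<alpha> where "\<And>j. 0 \<le> (A *v w) $ j + \<alpha> * b $ j" "\<And>i. w $ i \<le> 0" "0 \<le> \<alpha>"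
    "w \<bullet> c + \<alpha> * (c \<bullet> x) < 0"
    using dual_farkas_alternative by blast
  with assms primal_improvement show False
    by (metis primal_optimal_def not_le)
qed

definition vec_restrict :: "'a set \<Rightarrow> real^'a \<Rightarrow> real^'a" where
  "vec_restrict S v = (\<chi> j. if j \<in> S then v $ j else 0)"

lemma vec_restrict_component [simp]: "vec_restrict S v $ j = (if j \<in> S then v $ j else 0)"
  by (simp add: vec_restrict_def)

lemma linear_vec_restrict: "linear (vec_restrict S)"
  by (intro linearI) (simp_all add: vec_eq_iff)

lemma norm_vec_restrict_le: "norm (vec_restrict S v) \<le> norm v"
  by (rule norm_le_componentwise_cart) simp

lemma norm_vec_restrict_le_sum:
  assumes "\<And>j. j \<in> S \<Longrightarrow> 0 \<le> v $ j"
  shows "norm (vec_restrict S v) \<le> (\<Sum>j\<in>S. v $ j)"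
proof -
  have "norm (vec_restrict S v) \<le> (\<Sum>j\<in>UNIV. \<bar>vec_restrict S v $ j\<bar>)"
    by (rule norm_le_l1_cart)
  also have "\<dots> = (\<Sum>j\<in>UNIV. if j \<in> S then v $ j else 0)"
    using assms by (intro sum.cong) auto
  also have "\<dots> = (\<Sum>j\<in>S. v $ j)"
    by (simp add: sum.If_cases)
  finally show ?thesis .
qed

lemma col_restr_eq_vec_restrict_column: "col_restr A V k = vec_restrict V (column k A)"
  by (simp add: col_restr_def vec_restrict_def column_def vec_eq_iff)

lemma vec_restrict_matrix_vector_mult:
  fixes A :: "real^'n^'m"
  assumes "\<And>i. i \<notin> U \<Longrightarrow> t $ i = 0"
  shows "vec_restrict V (A *v t) = (\<Sum>k\<in>U. t $ k *\<^sub>R col_restr A V k)"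
proof -
  have "(A *v t) $ j = (\<Sum>k\<in>U. A $ j $ k * t $ k)" for j
    unfolding matrix_vector_mult_def using assms by (simp add: sum.mono_neutral_right)
  then show ?thesis
    by (simp add: vec_eq_iff col_restr_def sum_component mult.commute)
qed

lemma abs_coeff_mult_infdist_span_le:
  fixes a :: "'k \<Rightarrow> 'v::real_normed_vector"
  assumes "finite U" and "k \<in> U"
  shows "\<bar>t k\<bar> * infdist (a k) (span (a ` (U - {k}))) \<le> norm (\<Sum>l\<in>U. t l *\<^sub>R a l)"
proof (cases "t k = 0")
  case False
  define z where "z = (\<Sum>l\<in>U - {k}. t l *\<^sub>R a l)"
  have "z \<in> span (a ` (U - {k}))"
    unfolding z_def by (intro span_sum span_scale span_base) auto
  then have "infdist (a k) (span (a ` (U - {k}))) \<le> dist (a k) (- (1 / t k) *\<^sub>R z)"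
    by (intro infdist_le span_scale)
  also have "\<dots> = norm ((1 / t k) *\<^sub>R (t k *\<^sub>R a k + z))"
    using False by (simp add: dist_norm algebra_simps)
  also have "\<dots> = norm (\<Sum>l\<in>U. t l *\<^sub>R a l) / \<bar>t k\<bar>"
    using assms by (simp add: z_def sum.remove)
  finally show ?thesis
    using False by (simp add: pos_le_divide_eq mult.commute)
qed simp

lemma norm_le_sqrt_card_mult:
  fixes v :: "real^'n"
  assumes "\<And>i. \<bar>v $ i\<bar> \<le> K"
  shows "norm v \<le> sqrt (real CARD('n)) * K"
proof -
  have "0 \<le> K"
    using assms[of undefined] by simp
  have "norm v \<le> norm (\<chi> i::'n. K)"
    using assms \<open>0 \<le> K\<close> by (intro norm_le_componentwise_cart) simp
  also have "\<dots> = sqrt (real CARD('n)) * K"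
    using \<open>0 \<le> K\<close> by (simp add: norm_vec_def L2_set_def real_sqrt_mult)
  finally show ?thesis .
qed

lemma card_le_card_if_vec_restrict_injective:
  fixes f :: "real^'a \<Rightarrow> real^'b"
  assumes "linear f"
    and "\<And>x. (\<forall>i. i \<notin> X \<longrightarrow> x $ i = 0) \<Longrightarrow> vec_restrict Y (f x) = 0 \<Longrightarrow> x = 0"
  shows "card X \<le> card Y"
proof -
  define S where "S = {x::real^'a. \<forall>i. i \<notin> X \<longrightarrow> x $ i = 0}"
  define T where "T = {x::real^'b. \<forall>i. i \<notin> Y \<longrightarrow> x $ i = 0}"
  define g where "g = vec_restrict Y \<circ> f"
  have "linear g"
    unfolding g_def using assms(1) linear_vec_restrict by (rule linear_compose)
  have "subspace S"
    unfolding S_def subspace_def by auto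
  have "inj_on g S"
    unfolding linear_inj_on_iff_eq_0[OF \<open>linear g\<close> \<open>subspace S\<close>]
    using assms(2) by (auto simp: g_def S_def)
  then have "inj_on g (span S)"
    using \<open>subspace S\<close> by (simp add: span_eq_iff[THEN iffD2])
  then have "dim (g ` S) = dim S"
    by (rule dim_image_eq[OF \<open>linear g\<close>])
  also have "dim S = card X"
    using dim_substandard_cart[where 'a=real, of X] by (simp add: S_def dim_vec_eq)
  finally have "card X = dim (g ` S)" ..
  also have "\<dots> \<le> dim T"
    by (intro dim_subset) (auto simp: g_def S_def T_def)
  also have "dim T = card Y"
    using dim_substandard_cart[where 'a=real, of Y] by (simp add: T_def dim_vec_eq)
  finally show ?thesis .
qed

lemma norm_matrix_vector_mult_le: "norm (A *v v) \<le> onorm (\<lambda>x. A *v x) * norm (v :: real^'n)"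
  by (rule onorm) simp

lemma onorm_matrix_vector_mult_nonneg: "0 \<le> onorm (\<lambda>x. A *v (x :: real^'n))"
  by (rule onorm_pos_le) simp

lemma infdist_col_restr_span_le_onorm:
  fixes A :: "real^'n^'m"
  shows "infdist (col_restr A V k) (span T) \<le> onorm (\<lambda>x. A *v x)"
proof -
  have "infdist (col_restr A V k) (span T) \<le> dist (col_restr A V k) 0"
    by (intro infdist_le span_zero)
  also have "\<dots> \<le> norm (A *v axis k 1)"
    by (simp add: col_restr_eq_vec_restrict_column matrix_vector_mult_basis norm_vec_restrict_le)
  also have "\<dots> \<le> onorm (\<lambda>x. A *v x)"
    using norm_matrix_vector_mult_le[of A "axis k 1"] by simp
  finally show ?thesis .
qed

(* N stands for ||A||, r for sqrt n, and max 1 N * e / G bounds the displacement of x on U. *)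
lemma stability_margin_arith:
  fixes N r G L e :: real
  assumes "0 \<le> N" "1 \<le> r" "0 < G" "G \<le> N" "0 \<le> e"
    and margin: "e * (2 * max 1 (r * N) * (1 + N)) < L * G"
  shows "e + max 1 N * e / G < L" and "e + N * (r * (max 1 N * e / G) + e) < L"
proof -
  define M where "M = max 1 (r * N)"
  have "N \<le> r * N"
    using assms by (simp add: mult_le_cancel_right1)
  then have "1 \<le> M" "N \<le> M" "r * N \<le> M" "max 1 N \<le> M"
    by (auto simp: M_def)
  have "max 1 N \<le> 1 + N"
    using \<open>0 \<le> N\<close> by simp
  have "(e + max 1 N * e / G) * G = e * (G + max 1 N)"
    using \<open>0 < G\<close> by (simp add: field_simps)
  also have "\<dots> \<le> e * (2 * M * (1 + N))"
  proof (intro mult_left_mono \<open>0 \<le> e\<close>)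
    have "M \<le> M * (1 + N)"
      using \<open>1 \<le> M\<close> \<open>0 \<le> N\<close> by simp
    then show "G + max 1 N \<le> 2 * M * (1 + N)"
      using \<open>G \<le> N\<close> \<open>N \<le> M\<close> \<open>max 1 N \<le> M\<close> by linarith
  qed
  also have "\<dots> < L * G"
    using margin by (simp add: M_def)
  finally show "e + max 1 N * e / G < L"
    using \<open>0 < G\<close> by simp
  have "(e + N * (r * (max 1 N * e / G) + e)) * G = e * (G + (r * N) * max 1 N + N * G)"
    using \<open>0 < G\<close> by (simp add: field_simps)
  also have "\<dots> \<le> e * (2 * M * (1 + N))"
  proof (intro mult_left_mono \<open>0 \<le> e\<close>)
    have "(r * N) * max 1 N \<le> M * (1 + N)"
      using \<open>r * N \<le> M\<close> \<open>max 1 N \<le> 1 + N\<close> \<open>1 \<le> M\<close> assms by (intro mult_mono) auto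
    moreover have "N * G \<le> N * N"
      using assms by (simp add: mult_left_mono)
    moreover have "N * (1 + N) \<le> M * (1 + N)"
      using \<open>N \<le> M\<close> \<open>0 \<le> N\<close> by (simp add: mult_right_mono)
    ultimately show "G + (r * N) * max 1 N + N * G \<le> 2 * M * (1 + N)"
      using \<open>G \<le> N\<close> by (simp add: algebra_simps)
  qed
  also have "\<dots> < L * G"
    using margin by (simp add: M_def)
  finally show "e + N * (r * (max 1 N * e / G) + e) < L"
    using \<open>0 < G\<close> by simp
qed

lemma selects_n_smallest_if_threshold:
  fixes x :: "real^'n"
  assumes "card (- U) + card V = CARD('n)"
    and "\<And>i. i \<notin> U \<Longrightarrow> x $ i \<le> t" and "\<And>j. j \<in> V \<Longrightarrow> slack A b x j \<le> t"
    and "\<And>i. i \<in> U \<Longrightarrow> t < x $ i" and "\<And>j. j \<notin> V \<Longrightarrow> t < slack A b x j"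
  shows "selects_n_smallest A b x U V"
  using assms unfolding selects_n_smallest_def by (meson ComplD le_less_trans)

lemma ereal_le_delta:
  assumes "\<And>x. primal_feasible A b x \<Longrightarrow> c \<bullet> xs - c \<bullet> x < d \<Longrightarrow>
             selects_n_smallest A b x (supp_vec xs) (supp_vec ys)"
  shows "ereal d \<le> delta A b c xs ys"
  unfolding delta_def using assms by (intro Sup_upper) blast

lemma gamma_nonneg: "0 \<le> gamma A U V"
  by (simp add: gamma_def INF_greatest infdist_nonneg)

lemma gamma_le_infdist:
  "k \<in> U \<Longrightarrow> gamma A U V \<le> ereal (infdist (col_restr A V k) (span (col_restr A V ` (U - {k}))))"
  by (auto simp: gamma_def intro: INF_lower)

locale lp_optimal_pair =
  fixes A :: "real^'n^'m" and b :: "real^'m" and c :: "real^'n"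
    and xs :: "real^'n" and ys :: "real^'m"
  assumes xs_optimal: "primal_optimal A b c xs" and ys_optimal: "dual_optimal A b c ys"
begin

abbreviation "U \<equiv> supp_vec xs"
abbreviation "V \<equiv> supp_vec ys"
abbreviation "nA \<equiv> onorm (\<lambda>x. A *v x)"

lemma xs_feasible: "primal_feasible A b xs"
  using xs_optimal by (simp add: primal_optimal_def)

lemma ys_feasible: "dual_feasible A c ys"
  using ys_optimal by (simp add: dual_optimal_def)

lemma xs_eq_0: "i \<notin> U \<Longrightarrow> xs $ i = 0"
  using xs_feasible by (auto simp: supp_vec_def primal_feasible_def intro: antisym)

lemma strong_duality: "c \<bullet> xs = ys \<bullet> b"
proof -
  obtain y where "dual_feasible A c y" and "y \<bullet> b \<le> c \<bullet> xs"
    using dual_certificate[OF xs_optimal] .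
  then have "ys \<bullet> b \<le> c \<bullet> xs"
    using ys_optimal by (fastforce simp: dual_optimal_def)
  then show ?thesis
    using weak_duality[OF xs_feasible ys_feasible] by simp
qed

lemma complementary_slackness: "j \<in> V \<Longrightarrow> slack A b xs j = 0"
proof -
  have terms_nonneg: "0 \<le> ys $ j * slack A b xs j" "0 \<le> ((ys v* A) $ i - c $ i) * xs $ i" for i j
    using xs_feasible ys_feasible slack_nonneg[OF xs_feasible]
    by (auto simp: primal_feasible_def dual_feasible_def)
  have "(\<Sum>j\<in>UNIV. ys $ j * slack A b xs j) + (\<Sum>i\<in>UNIV. ((ys v* A) $ i - c $ i) * xs $ i) = 0"
    using duality_gap_eq[of ys b c xs A] strong_duality by simp
  then have "ys $ j * slack A b xs j = 0" for j
    using terms_nonneg by (simp add: add_nonneg_eq_0_iff sum_nonneg sum_nonneg_eq_0_iff)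
  then show "j \<in> V \<Longrightarrow> slack A b xs j = 0"
    by (metis supp_vec_def mem_Collect_eq mult_eq_0_iff less_irrefl)
qed

lemma delta_nonneg: "0 \<le> delta A b c xs ys"
  using ereal_le_delta[of A b c xs 0 ys] xs_optimal
  by (fastforce simp: primal_optimal_def zero_ereal_def)

abbreviation "lam \<equiv> min (min (alpha_P xs) (alpha_D ys)) (min (beta_P A b xs ys) (beta_D A c xs ys))"

lemma lam_le:
  shows "i \<in> U \<Longrightarrow> lam \<le> ereal (xs $ i)"
    and "j \<in> V \<Longrightarrow> lam \<le> ereal (ys $ j)"
    and "j \<notin> V \<Longrightarrow> lam \<le> ereal (slack A b xs j)"
    and "i \<notin> U \<Longrightarrow> lam \<le> ereal ((ys v* A) $ i - c $ i)"
  by (auto simp: alpha_P_def alpha_D_def beta_P_def beta_D_def min_le_iff_disj intro: INF_lower)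

lemma lam_nonneg: "0 \<le> lam"
  using slack_nonneg[OF xs_feasible] ys_feasible
  by (auto simp: alpha_P_def alpha_D_def beta_P_def beta_D_def supp_vec_def dual_feasible_def
      intro!: INF_greatest)

end

(* L and G are real lower bounds in the roles of lambda and gamma. *)
locale nondegenerate_optimal_pair = lp_optimal_pair A b c xs ys
  for A :: "real^'n^'m" and b c xs ys +
  fixes L G :: real
  assumes L_pos: "0 < L" and G_pos: "0 < G" and support_nonempty: "supp_vec xs \<noteq> {}"
    and xs_ge: "i \<in> supp_vec xs \<Longrightarrow> L \<le> xs $ i"
    and ys_ge: "j \<in> supp_vec ys \<Longrightarrow> L \<le> ys $ j"
    and slack_ge: "j \<notin> supp_vec ys \<Longrightarrow> L \<le> slack A b xs j"
    and reduced_cost_ge: "i \<notin> supp_vec xs \<Longrightarrow> L \<le> (ys v* A) $ i - c $ i"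
    and infdist_ge: "k \<in> supp_vec xs \<Longrightarrow>
      G \<le> infdist (col_restr A (supp_vec ys) k) (span (col_restr A (supp_vec ys) ` (supp_vec xs - {k})))"
    and ys_unique: "dual_optimal A b c y \<Longrightarrow> y = ys"
begin

lemma gap_ge:
  assumes "primal_feasible A b x"
  shows "L * ((\<Sum>j\<in>V. slack A b x j) + (\<Sum>i\<in>-U. x $ i)) \<le> c \<bullet> xs - c \<bullet> x"
proof -
  have x_nonneg: "0 \<le> x $ i" for i
    using assms by (simp add: primal_feasible_def)
  have "L * (\<Sum>j\<in>V. slack A b x j) \<le> (\<Sum>j\<in>V. ys $ j * slack A b x j)"
    unfolding sum_distrib_left
    using ys_ge slack_nonneg[OF assms] by (intro sum_mono mult_right_mono) auto
  also have "\<dots> \<le> (\<Sum>j\<in>UNIV. ys $ j * slack A b x j)"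
    using ys_feasible slack_nonneg[OF assms] by (intro sum_mono2) (auto simp: dual_feasible_def)
  finally have slack_part: "L * (\<Sum>j\<in>V. slack A b x j) \<le> (\<Sum>j\<in>UNIV. ys $ j * slack A b x j)" .
  have "L * (\<Sum>i\<in>-U. x $ i) \<le> (\<Sum>i\<in>-U. ((ys v* A) $ i - c $ i) * x $ i)"
    unfolding sum_distrib_left
    using reduced_cost_ge x_nonneg by (intro sum_mono mult_right_mono) auto
  also have "\<dots> \<le> (\<Sum>i\<in>UNIV. ((ys v* A) $ i - c $ i) * x $ i)"
    using ys_feasible x_nonneg by (intro sum_mono2) (auto simp: dual_feasible_def)
  finally have x_part: "L * (\<Sum>i\<in>-U. x $ i) \<le> (\<Sum>i\<in>UNIV. ((ys v* A) $ i - c $ i) * x $ i)" .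
  show ?thesis
    using slack_part x_part duality_gap_eq[of ys b c x A] strong_duality by (simp add: distrib_left)
qed

lemma card_U_le_card_V: "card U \<le> card V"
proof (rule card_le_card_if_vec_restrict_injective[OF matrix_vector_mul_linear])
  fix t :: "real^'n"
  assume t_supp: "\<forall>i. i \<notin> U \<longrightarrow> t $ i = 0" and "vec_restrict V (A *v t) = 0"
  then have sum_0: "(\<Sum>k\<in>U. t $ k *\<^sub>R col_restr A V k) = 0"
    using vec_restrict_matrix_vector_mult[of U t V A] by simp
  have "t $ k = 0" if "k \<in> U" for k
  proof -
    have "\<bar>t $ k\<bar> * G \<le> \<bar>t $ k\<bar> * infdist (col_restr A V k) (span (col_restr A V ` (U - {k})))"
      using infdist_ge[OF that] by (simp add: mult_left_mono)
    also have "\<dots> \<le> 0"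
      using abs_coeff_mult_infdist_span_le[of U k "\<lambda>k. t $ k" "col_restr A V"] that sum_0 by simp
    finally show ?thesis
      using G_pos by (simp add: mult_le_0_iff)
  qed
  with t_supp show "t = 0"
    by (auto simp: vec_eq_iff)
qed

lemma dual_optimal_perturbation:
  assumes u_supp: "\<And>j. j \<notin> V \<Longrightarrow> u $ j = 0" and uA: "\<And>i. i \<in> U \<Longrightarrow> (u v* A) $ i = 0"
    and "u \<bullet> b = 0" and small: "\<bar>\<epsilon>\<bar> * (norm u + norm (u v* A)) \<le> L"
  shows "dual_optimal A b c (ys + \<epsilon> *\<^sub>R u)"
proof -
  have u_small: "\<bar>\<epsilon> * u $ j\<bar> \<le> L" for j
  proof -
    have "\<bar>u $ j\<bar> \<le> norm u + norm (u v* A)"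
      using component_le_norm_cart[of u j] norm_ge_zero[of "u v* A"] by linarith
    then show ?thesis
      using small by (simp add: abs_mult order_trans[OF mult_left_mono])
  qed
  have uA_small: "\<bar>\<epsilon> * (u v* A) $ i\<bar> \<le> L" for i
  proof -
    have "\<bar>(u v* A) $ i\<bar> \<le> norm u + norm (u v* A)"
      using component_le_norm_cart[of "u v* A" i] norm_ge_zero[of u] by linarith
    then show ?thesis
      using small by (simp add: abs_mult order_trans[OF mult_left_mono])
  qed
  have "dual_feasible A c (ys + \<epsilon> *\<^sub>R u)"
    unfolding dual_feasible_def
  proof (intro conjI allI)
    fix j
    show "0 \<le> (ys + \<epsilon> *\<^sub>R u) $ j"
      using ys_feasible ys_ge[of j] u_small[of j] u_supp[of j]
      by (cases "j \<in> V") (auto simp: dual_feasible_def)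
  next
    fix i
    have "(ys + \<epsilon> *\<^sub>R u) v* A = ys v* A + \<epsilon> *\<^sub>R (u v* A)"
      by (simp add: vector_matrix_left_distrib vector_matrix_mult_scaleR)
    then show "c $ i \<le> ((ys + \<epsilon> *\<^sub>R u) v* A) $ i"
      using ys_feasible reduced_cost_ge[of i] uA_small[of i] uA[of i]
      by (cases "i \<in> U") (auto simp: dual_feasible_def)
  qed
  moreover have "(ys + \<epsilon> *\<^sub>R u) \<bullet> b = ys \<bullet> b"
    using \<open>u \<bullet> b = 0\<close> by (simp add: inner_add_left)
  ultimately show ?thesis
    using ys_optimal by (simp add: dual_optimal_def)
qed

lemma card_V_le_card_U: "card V \<le> card U"
proof (rule card_le_card_if_vec_restrict_injective[OF linear_vector_matrix_mult])
  fix u :: "real^'m"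
  assume u_supp: "\<forall>j. j \<notin> V \<longrightarrow> u $ j = 0" and "vec_restrict U (u v* A) = 0"
  then have uA: "(u v* A) $ i = 0" if "i \<in> U" for i
    using that by (metis vec_restrict_component zero_index)
  have "u \<bullet> b = u \<bullet> (A *v xs)"
    unfolding inner_vec_def using u_supp complementary_slackness
    by (intro sum.cong) (auto simp: slack_def)
  also have "\<dots> = (u v* A) \<bullet> xs"
    by (simp add: dot_lmul_matrix)
  also have "\<dots> = 0"
    unfolding inner_vec_def using uA xs_eq_0 by (intro sum.neutral) auto
  finally have "u \<bullet> b = 0" .
  define \<epsilon> where "\<epsilon> = L / (1 + norm u + norm (u v* A))"
  have "0 < 1 + norm u + norm (u v* A)"
    by (simp add: add_pos_nonneg)
  then have "0 < \<epsilon>"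
    using L_pos by (simp add: \<epsilon>_def)
  have "\<bar>\<epsilon>\<bar> * (norm u + norm (u v* A)) \<le> \<epsilon> * (1 + norm u + norm (u v* A))"
    using \<open>0 < \<epsilon>\<close> by (simp add: algebra_simps)
  also have "\<dots> = L"
    using \<open>0 < 1 + norm u + norm (u v* A)\<close> by (simp add: \<epsilon>_def)
  finally have "\<bar>\<epsilon>\<bar> * (norm u + norm (u v* A)) \<le> L" .
  then have "ys + \<epsilon> *\<^sub>R u = ys"
    using u_supp uA \<open>u \<bullet> b = 0\<close> by (intro ys_unique dual_optimal_perturbation) auto
  then show "u = 0"
    using \<open>0 < \<epsilon>\<close> by simp
qed

lemma card_U_eq_card_V: "card U = card V"
  using card_U_le_card_V card_V_le_card_U by simp

lemma off_support_sum_le: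
  assumes "primal_feasible A b x" and "c \<bullet> xs - c \<bullet> x \<le> L * e"
  shows "(\<Sum>j\<in>V. slack A b x j) + (\<Sum>i\<in>-U. x $ i) \<le> e"
  using order_trans[OF gap_ge[OF assms(1)] assms(2)] L_pos by simp

lemma gap_bound_nonneg:
  assumes "primal_feasible A b x" and "c \<bullet> xs - c \<bullet> x \<le> L * e"
  shows "0 \<le> e"
proof -
  have "c \<bullet> x \<le> c \<bullet> xs"
    using xs_optimal assms(1) by (simp add: primal_optimal_def)
  then have "0 \<le> L * e"
    using assms(2) by linarith
  then show ?thesis
    using L_pos by (simp add: zero_le_mult_iff)
qed

lemma off_support_entries_le:
  assumes x: "primal_feasible A b x" and gap: "c \<bullet> xs - c \<bullet> x \<le> L * e"
  shows "i \<notin> U \<Longrightarrow> x $ i \<le> e" and "j \<in> V \<Longrightarrow> slack A b x j \<le> e"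
    and "norm (vec_restrict (-U) x) \<le> e"
proof -
  have x_nonneg: "0 \<le> x $ i" for i
    using x by (simp add: primal_feasible_def)
  have sums_nonneg: "0 \<le> (\<Sum>j\<in>V. slack A b x j)" "0 \<le> (\<Sum>i\<in>-U. x $ i)"
    using slack_nonneg[OF x] x_nonneg by (simp_all add: sum_nonneg)
  show "i \<notin> U \<Longrightarrow> x $ i \<le> e"
    using member_le_sum[of i "-U" "\<lambda>i. x $ i"] x_nonneg off_support_sum_le[OF x gap] sums_nonneg
    by fastforce
  show "j \<in> V \<Longrightarrow> slack A b x j \<le> e"
    using member_le_sum[of j V "slack A b x"] slack_nonneg[OF x] off_support_sum_le[OF x gap] sums_nonneg
    by fastforce
  show "norm (vec_restrict (-U) x) \<le> e"
    using norm_vec_restrict_le_sum[of "-U" x] x_nonneg off_support_sum_le[OF x gap] sums_nonneg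
    by simp
qed

lemma support_residual_le:
  assumes x: "primal_feasible A b x" and gap: "c \<bullet> xs - c \<bullet> x \<le> L * e"
  shows "norm (vec_restrict V (A *v vec_restrict U (x - xs))) \<le> max 1 nA * e"
proof -
  define d where "d = vec_restrict U (x - xs)"
  define xN where "xN = vec_restrict (-U) x"
  have x_nonneg: "0 \<le> x $ i" for i
    using x by (simp add: primal_feasible_def)
  have "d = x - xs - xN"
    by (simp add: vec_eq_iff d_def xN_def xs_eq_0)
  then have "A *v d = A *v x - A *v xs - A *v xN"
    by (simp add: matrix_vector_mult_diff_distrib)
  then have "vec_restrict V (A *v d) = - vec_restrict V (b - A *v x) - vec_restrict V (A *v xN)"
    using complementary_slackness by (auto simp: vec_eq_iff slack_def)
  then have "norm (vec_restrict V (A *v d)) \<le>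
      norm (vec_restrict V (b - A *v x)) + norm (vec_restrict V (A *v xN))"
    by (metis norm_minus_cancel norm_triangle_ineq4)
  also have "\<dots> \<le> (\<Sum>j\<in>V. slack A b x j) + nA * (\<Sum>i\<in>-U. x $ i)"
  proof (rule add_mono)
    show "norm (vec_restrict V (b - A *v x)) \<le> (\<Sum>j\<in>V. slack A b x j)"
      using norm_vec_restrict_le_sum[of V "b - A *v x"] slack_nonneg[OF x] by (simp add: slack_def)
    have "norm (vec_restrict V (A *v xN)) \<le> nA * norm xN"
      using norm_vec_restrict_le norm_matrix_vector_mult_le by (rule order_trans)
    also have "\<dots> \<le> nA * (\<Sum>i\<in>-U. x $ i)"
      unfolding xN_def using norm_vec_restrict_le_sum x_nonneg
      by (intro mult_left_mono onorm_matrix_vector_mult_nonneg) auto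
    finally show "norm (vec_restrict V (A *v xN)) \<le> nA * (\<Sum>i\<in>-U. x $ i)" .
  qed
  also have "\<dots> \<le> max 1 nA * ((\<Sum>j\<in>V. slack A b x j) + (\<Sum>i\<in>-U. x $ i))"
  proof -
    have "0 \<le> (\<Sum>j\<in>V. slack A b x j)" "0 \<le> (\<Sum>i\<in>-U. x $ i)"
      using slack_nonneg[OF x] x_nonneg by (simp_all add: sum_nonneg)
    then show ?thesis
      by (simp add: distrib_left add_mono mult_right_mono mult_le_cancel_right1)
  qed
  also have "\<dots> \<le> max 1 nA * e"
    using off_support_sum_le[OF x gap] by (simp add: mult_left_mono)
  finally show ?thesis
    by (simp add: d_def)
qed

lemma support_displacement_le:
  assumes x: "primal_feasible A b x" and gap: "c \<bullet> xs - c \<bullet> x \<le> L * e" and "i \<in> U"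
  shows "\<bar>x $ i - xs $ i\<bar> \<le> max 1 nA * e / G"
proof -
  define d where "d = vec_restrict U (x - xs)"
  have "\<bar>d $ i\<bar> * G \<le> \<bar>d $ i\<bar> * infdist (col_restr A V i) (span (col_restr A V ` (U - {i})))"
    using infdist_ge[OF \<open>i \<in> U\<close>] by (simp add: mult_left_mono)
  also have "\<dots> \<le> norm (\<Sum>k\<in>U. d $ k *\<^sub>R col_restr A V k)"
    using \<open>i \<in> U\<close> by (intro abs_coeff_mult_infdist_span_le) simp_all
  also have "(\<Sum>k\<in>U. d $ k *\<^sub>R col_restr A V k) = vec_restrict V (A *v d)"
    by (rule vec_restrict_matrix_vector_mult[symmetric]) (simp add: d_def)
  also have "norm \<dots> \<le> max 1 nA * e"
    unfolding d_def by (rule support_residual_le[OF x gap])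
  finally show ?thesis
    using G_pos \<open>i \<in> U\<close> by (simp add: d_def pos_le_divide_eq)
qed

lemma slack_displacement_le:
  assumes x: "primal_feasible A b x" and gap: "c \<bullet> xs - c \<bullet> x \<le> L * e"
  shows "\<bar>slack A b x j - slack A b xs j\<bar> \<le> nA * (sqrt (real CARD('n)) * (max 1 nA * e / G) + e)"
proof -
  define K where "K = max 1 nA * e / G"
  define d where "d = vec_restrict U (x - xs)"
  have "norm d \<le> sqrt (real CARD('n)) * K"
  proof (rule norm_le_sqrt_card_mult)
    show "\<bar>d $ i\<bar> \<le> K" for i
      using support_displacement_le[OF x gap, of i] gap_bound_nonneg[OF x gap] G_pos
      by (simp add: d_def K_def)
  qed
  moreover have "x - xs = d + vec_restrict (-U) x"
    by (simp add: vec_eq_iff d_def xs_eq_0)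
  ultimately have "norm (x - xs) \<le> sqrt (real CARD('n)) * K + e"
    using off_support_entries_le(3)[OF x gap] by (metis add_mono norm_triangle_le)
  have "\<bar>slack A b x j - slack A b xs j\<bar> = \<bar>(A *v (x - xs)) $ j\<bar>"
    by (simp add: slack_def matrix_vector_mult_diff_distrib)
  also have "\<dots> \<le> nA * norm (x - xs)"
    using component_le_norm_cart norm_matrix_vector_mult_le by (rule order_trans)
  also have "\<dots> \<le> nA * (sqrt (real CARD('n)) * K + e)"
    using \<open>norm (x - xs) \<le> _\<close> by (simp add: mult_left_mono onorm_matrix_vector_mult_nonneg)
  finally show ?thesis
    by (simp add: K_def)
qed

lemma selects_n_smallest_if_gap_lt:
  assumes x: "primal_feasible A b x"
    and gap: "c \<bullet> xs - c \<bullet> x < L\<^sup>2 * G / (2 * max 1 (sqrt (real CARD('n)) * nA) * (1 + nA))"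
  shows "selects_n_smallest A b x U V"
proof -
  define r where "r = sqrt (real CARD('n))"
  define P where "P = 2 * max 1 (r * nA) * (1 + nA)"
  define e where "e = (c \<bullet> xs - c \<bullet> x) / L"
  define K where "K = max 1 nA * e / G"
  have gap_e: "c \<bullet> xs - c \<bullet> x \<le> L * e"
    using L_pos by (simp add: e_def)
  have "0 < P"
    using onorm_matrix_vector_mult_nonneg[of A] by (simp add: P_def add_pos_nonneg)
  then have "(c \<bullet> xs - c \<bullet> x) * P < L\<^sup>2 * G"
    using gap by (simp add: P_def r_def pos_less_divide_eq)
  then have "e * P < L * G"
    using L_pos by (simp add: e_def power2_eq_square field_simps)
  moreover obtain k where "k \<in> U"
    using support_nonempty by blast
  then have "G \<le> nA"
    using infdist_ge infdist_col_restr_span_le_onorm order_trans by blast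
  ultimately have margin: "e + K < L" "e + nA * (r * K + e) < L"
    using stability_margin_arith[of nA r G e L] onorm_matrix_vector_mult_nonneg[of A] G_pos
      gap_bound_nonneg[OF x gap_e]
    by (simp_all add: r_def K_def P_def)
  have x_big: "L - K \<le> x $ i" if "i \<in> U" for i
    using support_displacement_le[OF x gap_e that] xs_ge[OF that] by (simp add: K_def)
  have slack_big: "L - nA * (r * K + e) \<le> slack A b x j" if "j \<notin> V" for j
    using slack_displacement_le[OF x gap_e, of j] slack_ge[OF that] by (simp add: K_def r_def)
  show ?thesis
  proof (rule selects_n_smallest_if_threshold)
    show "card (- U) + card V = CARD('n)"
      using card_U_eq_card_V card_Un_disjoint[of "-U" U] by (simp add: Un_commute)
    show "e < x $ i" if "i \<in> U" for i
      using x_big[OF that] margin(1) by simp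
    show "e < slack A b x j" if "j \<notin> V" for j
      using slack_big[OF that] margin(2) by simp
  qed (use off_support_entries_le[OF x gap_e] in auto)
qed

end

context lp_optimal_pair
begin

lemma nondegenerate_if_bound_pos:
  assumes "0 < P" and bound_pos: "0 < lam\<^sup>2 * gamma A U V / ereal P"
    and "\<And>y. dual_optimal A b c y \<Longrightarrow> y = ys"
  obtains L G where "lam = ereal L" and "gamma A U V = ereal G"
    and "nondegenerate_optimal_pair A b c xs ys L G"
proof -
  have "U \<noteq> {}"
    using bound_pos by (auto simp: gamma_def)
  then obtain k where "k \<in> U"
    by blast
  obtain L where L: "lam = ereal L" and "0 \<le> L"
    using lam_le(1)[OF \<open>k \<in> U\<close>] lam_nonneg by (cases lam) auto
  obtain G where G: "gamma A U V = ereal G" and "0 \<le> G"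
    using gamma_le_infdist[OF \<open>k \<in> U\<close>, of A V] gamma_nonneg[of A U V]
    by (cases "gamma A U V") auto
  have "0 < L\<^sup>2 * G"
    using bound_pos \<open>0 < P\<close> by (simp add: L G zero_less_divide_iff)
  then have "0 < L" and "0 < G"
    using \<open>0 \<le> L\<close> \<open>0 \<le> G\<close> by (auto simp: zero_less_mult_iff)
  have "G \<le> infdist (col_restr A V i) (span (col_restr A V ` (U - {i})))" if "i \<in> U" for i
    using gamma_le_infdist[OF that, of A V] by (simp add: G)
  then have "nondegenerate_optimal_pair A b c xs ys L G"
    using \<open>0 < L\<close> \<open>0 < G\<close> \<open>U \<noteq> {}\<close> assms(3) lam_le
    by unfold_locales (auto simp: L)
  with L G show thesis
    by (rule that)
qed

end

theorem mainTheorem4: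
  fixes A :: "real^'n^'m" and b :: "real^'m" and c :: "real^'n"
    and xs :: "real^'n" and ys :: "real^'m"
  assumes "primal_optimal A b c xs"
    and "\<forall>x. primal_optimal A b c x \<longrightarrow> x = xs"
    and "dual_optimal A b c ys"
    and "\<forall>y. dual_optimal A b c y \<longrightarrow> y = ys"
  shows "delta A b c xs ys \<ge>
    (let lam = min (min (alpha_P xs) (alpha_D ys)) (min (beta_P A b xs ys) (beta_D A c xs ys));
         nA = onorm (\<lambda>x. A *v x)
     in lam ^ 2 * gamma A (supp_vec xs) (supp_vec ys)
          / ereal (2 * max 1 (sqrt (real CARD('n)) * nA) * (1 + nA)))"
proof -
  interpret lp_optimal_pair A b c xs ys
    using assms(1,3) by unfold_locales
  define P where "P = 2 * max 1 (sqrt (real CARD('n)) * nA) * (1 + nA)"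
  have "0 < P"
    using onorm_matrix_vector_mult_nonneg[of A] by (simp add: P_def add_pos_nonneg)
  have "lam\<^sup>2 * gamma A U V / ereal P \<le> delta A b c xs ys"
  proof (cases "0 < lam\<^sup>2 * gamma A U V / ereal P")
    case True
    then obtain L G where lam: "lam = ereal L" and gam: "gamma A U V = ereal G"
      and nondegenerate: "nondegenerate_optimal_pair A b c xs ys L G"
      using nondegenerate_if_bound_pos \<open>0 < P\<close> assms(4) by blast
    interpret nondegenerate_optimal_pair A b c xs ys L G
      by (fact nondegenerate)
    have "ereal (L\<^sup>2 * G / P) \<le> delta A b c xs ys"
      using selects_n_smallest_if_gap_lt by (intro ereal_le_delta) (simp add: P_def)
    then show ?thesis
      using \<open>0 < P\<close> by (simp add: lam gam)
  next
    case False
    then show ?thesis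
      using delta_nonneg by (meson not_less order_trans)
  qed
  then show ?thesis
    by (simp add: Let_def P_def)
qed

end
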